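(* Let $\eta\in(0,\pi/3)$. If $w_0<0$, then $w_0\in\triangle(0,z_2,z_3)\cap\triangle(0,\bar z_2,\bar z_3)$.
   Context: Let $a=\frac{e^{-i\eta}}{2\cos\eta}$, $c=\frac{1}{1-|a|^4}$, $z_k=ca^{k+1}$ for $k\ge0$, and $w_0=1-c|a|^2$ (a real number). For $u,v,w\in\mathbb{C}$, $\triangle(u,v,w)$ denotes the closed solid triangle with vertices $u,v,w$. *)

theory Defs
  imports "HOL-Analysis.Analysis"
begin

definition tri_a :: "real \<Rightarrow> complex" where
  "tri_a \<eta> = exp (- \<i> * of_real \<eta>) / (2 * of_real (cos \<eta>))"

definition tri_c :: "real \<Rightarrow> real" where
  "tri_c \<eta> = 1 / (1 - cmod (tri_a \<eta>) ^ 4)"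

definition tri_z :: "real \<Rightarrow> nat \<Rightarrow> complex" where
  "tri_z \<eta> k = of_real (tri_c \<eta>) * tri_a \<eta> ^ (k + 1)"

definition tri_w0 :: "real \<Rightarrow> real" where
  "tri_w0 \<eta> = 1 - tri_c \<eta> * cmod (tri_a \<eta>) ^ 2"

definition solid_triangle :: "complex \<Rightarrow> complex \<Rightarrow> complex \<Rightarrow> complex set" where
  "solid_triangle u v w = convex hull {u, v, w}"

end

theory Submission
  imports Defs
begin

text \<open>
  Since \<open>a = e\<^sup>-\<^sup>i\<^sup>\<eta> / (2 cos \<eta>)\<close> has \<open>Re a = 1/2\<close>, we get \<open>cnj a = 1 - a\<close> and \<open>\<rho> = |a|\<^sup>2 = a (1 - a)\<close>.
  Hence \<open>(1 - 2\<rho>) a\<^sup>3 - (1 - \<rho>) a\<^sup>4 = a\<^sup>3 (1 - a)\<^sup>3 = \<rho>\<^sup>3\<close>, which writes the real number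
  \<open>w\<^sub>0\<close> as a real combination of \<open>z\<^sub>2 = c a\<^sup>3\<close> and \<open>z\<^sub>3 = c a\<^sup>4\<close>. Its coefficients are
  nonnegative with sum at most one as soon as \<open>1/2 \<le> \<rho> < 1\<close>, and \<open>w\<^sub>0 < 0\<close> forces
  \<open>\<rho>\<^sup>2 + \<rho> > 1\<close>. The conjugate triangle is the same statement for \<open>cnj a\<close>.
\<close>

lemma solid_triangle_0_memI:
  fixes b c p :: complex
  assumes "0 \<le> s" "0 \<le> t" "s + t \<le> 1" "p = s *\<^sub>R b + t *\<^sub>R c"
  shows "p \<in> solid_triangle 0 b c"
  unfolding solid_triangle_def convex_hull_3_alt using assms by force

lemma cube_fourth_power_identity_Re_half:
  fixes a :: complex
  assumes "Re a = 1/2"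
  shows "of_real (1 - 2 * cmod a ^ 2) * a ^ 3 - of_real (1 - cmod a ^ 2) * a ^ 4
           = of_real (cmod a ^ 6)"
proof -
  have "cnj a = 1 - a"
    using assms by (simp add: complex_eq_iff)
  then have norm_sq: "of_real (cmod a ^ 2) = a * (1 - a)"
    by (simp only: complex_norm_square)
  have "of_real (1 - 2 * cmod a ^ 2) * a ^ 3 - of_real (1 - cmod a ^ 2) * a ^ 4
          = (1 - 2 * (a * (1 - a))) * a ^ 3 - (1 - a * (1 - a)) * a ^ 4"
    by (simp only: of_real_diff of_real_mult of_real_1 of_real_numeral norm_sq)
  also have "\<dots> = (a * (1 - a)) ^ 3"
    by algebra
  also have "\<dots> = of_real (cmod a ^ 6)"
    unfolding norm_sq [symmetric] of_real_power [symmetric] power_mult [symmetric] by simp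
  finally show ?thesis .
qed

lemma negative_real_in_triangle_0_cube_fourth:
  fixes a :: complex and c w :: real
  assumes "Re a = 1/2" "cmod a < 1"
    and c: "c = 1 / (1 - cmod a ^ 4)" and w: "w = 1 - c * cmod a ^ 2" and "w < 0"
  shows "of_real w \<in> solid_triangle 0 (of_real c * a ^ 3) (of_real c * a ^ 4)"
proof -
  define \<rho> where "\<rho> = cmod a ^ 2"
  have "a \<noteq> 0"
    using assms(1) by auto
  then have "0 < \<rho>" "\<rho> < 1"
    using assms(2) by (auto simp: \<rho>_def power_less_one_iff)
  have "cmod a ^ 4 = \<rho>\<^sup>2"
    unfolding \<rho>_def power_mult [symmetric] by simp
  then have c_eq: "c = 1 / (1 - \<rho>\<^sup>2)"
    by (simp add: c)
  have "\<rho>\<^sup>2 < 1"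
    using \<open>0 < \<rho>\<close> \<open>\<rho> < 1\<close> by (simp add: power_less_one_iff)
  then have "0 < c"
    by (simp add: c_eq)
  have w_div_c: "w / c = 1 - \<rho>\<^sup>2 - \<rho>"
    using \<open>\<rho>\<^sup>2 < 1\<close> by (simp add: w c_eq \<rho>_def field_simps)
  then have "1 < \<rho>\<^sup>2 + \<rho>"
    using \<open>w < 0\<close> \<open>0 < c\<close> by (smt (verit) divide_neg_pos)
  moreover have "\<rho>\<^sup>2 \<le> \<rho>"
    using \<open>0 < \<rho>\<close> \<open>\<rho> < 1\<close> by (simp add: power2_eq_square)
  ultimately have "1/2 \<le> \<rho>"
    by linarith
  define s where "s = w * (1 - 2 * \<rho>) / (c * \<rho> ^ 3)"
  define t where "t = - w * (1 - \<rho>) / (c * \<rho> ^ 3)"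
  have "0 \<le> s"
    unfolding s_def using \<open>w < 0\<close> \<open>0 < c\<close> \<open>0 < \<rho>\<close> \<open>1/2 \<le> \<rho>\<close>
    by (intro divide_nonneg_pos mult_nonpos_nonpos) auto
  moreover have "0 \<le> t"
    unfolding t_def using \<open>w < 0\<close> \<open>0 < c\<close> \<open>0 < \<rho>\<close> \<open>\<rho> < 1\<close>
    by (intro divide_nonneg_pos mult_nonneg_nonneg) auto
  moreover have "s + t \<le> 1"
  proof -
    have "s + t = - (w / c) / \<rho>\<^sup>2"
      using \<open>0 < c\<close> \<open>0 < \<rho>\<close> by (simp add: s_def t_def field_simps power2_eq_square power3_eq_cube)
    also have "\<dots> = 1 - (1 - \<rho>) / \<rho>\<^sup>2"
      using \<open>0 < \<rho>\<close> by (simp add: w_div_c field_simps)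
    also have "\<dots> \<le> 1"
      using \<open>\<rho> < 1\<close> by simp
    finally show ?thesis .
  qed
  moreover have "of_real w = s *\<^sub>R (of_real c * a ^ 3) + t *\<^sub>R (of_real c * a ^ 4)"
  proof -
    have "s *\<^sub>R (of_real c * a ^ 3) + t *\<^sub>R (of_real c * a ^ 4)
          = of_real (w / \<rho> ^ 3) * (of_real (1 - 2 * \<rho>) * a ^ 3 - of_real (1 - \<rho>) * a ^ 4)"
      using \<open>0 < c\<close> \<open>0 < \<rho>\<close> by (simp add: s_def t_def scaleR_conv_of_real field_simps)
    also have "\<dots> = of_real w"
      using cube_fourth_power_identity_Re_half[OF assms(1)] \<open>0 < \<rho>\<close>
      by (simp add: \<rho>_def flip: power_mult)
    finally show ?thesis ..
  qed
  ultimately show ?thesis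
    by (rule solid_triangle_0_memI)
qed

lemma Re_tri_a:
  assumes "cos \<eta> \<noteq> 0"
  shows "Re (tri_a \<eta>) = 1/2"
  using assms by (simp add: tri_a_def Re_exp)

lemma norm_tri_a: "cmod (tri_a \<eta>) = 1 / (2 * \<bar>cos \<eta>\<bar>)"
  by (simp add: tri_a_def norm_divide)

theorem lemma3p2:
  fixes \<eta> :: real
  assumes "0 < \<eta>" and "\<eta> < pi / 3"
    and "tri_w0 \<eta> < 0"
  shows "complex_of_real (tri_w0 \<eta>) \<in>
           solid_triangle 0 (tri_z \<eta> 2) (tri_z \<eta> 3) \<inter>
           solid_triangle 0 (cnj (tri_z \<eta> 2)) (cnj (tri_z \<eta> 3))"
proof -
  have "cos (pi / 3) < cos \<eta>"
    using assms(1,2) by (intro cos_monotone_0_pi) auto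
  then have "1/2 < cos \<eta>"
    by (simp add: cos_60)
  then have Re: "Re (tri_a \<eta>) = 1/2" and norm: "cmod (tri_a \<eta>) < 1"
    by (simp_all add: Re_tri_a norm_tri_a)
  have "of_real (tri_w0 \<eta>) \<in> solid_triangle 0 (of_real (tri_c \<eta>) * a ^ 3) (of_real (tri_c \<eta>) * a ^ 4)"
    if "Re a = 1/2" "cmod a = cmod (tri_a \<eta>)" for a
    using negative_real_in_triangle_0_cube_fourth[of a] that norm assms(3)
    by (simp add: tri_c_def tri_w0_def)
  from this[of "tri_a \<eta>"] this[of "cnj (tri_a \<eta>)"] show ?thesis
    using Re by (simp add: tri_z_def numeral_eq_Suc)
qed

end
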